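(* Let $k\in\mathbb N$, $1\le q<\infty$, $\alpha,\beta\in\mathbb R$, and $f\in\mathbb M_+^k\cap\mathbb W_q^{\alpha,\beta}$. Then, for every $\delta>0$, \[ \overleftarrow\Omega_\varphi^k(f,\delta)_{w_{\alpha,\beta},q}\le c\|w_{\alpha,\beta}f\|_{L_q[1-2k^2\delta^2,1]}, \] with $c$ independent of $f$ and $\delta$.
   Context: $w_{\alpha,\beta}(x)=(1+x)^\alpha(1-x)^\beta$; $\|g\|_{L_q(S)}$ is the $L_q$ norm over $S$, $\|\cdot\|_q$ the $L_q[-1,1]$ norm; $\mathbb W_q^{\alpha,\beta}=\{f:\|w_{\alpha,\beta}f\|_q<\infty\}$. $\Delta_h^k(f,x)=\sum_{i=0}^k\binom ki(-1)^{k-i}f(x-kh/2+ih)$ if $x\pm kh/2\in[-1,1]$, else $0$, and $\overleftarrow\Delta_h^k(f,x)=\Delta_h^k(f,x-kh/2)$. For a weight $w$, $\overleftarrow\Omega_\varphi^k(f,\delta)_{w,q}=\sup_{0<h\le2k^2\delta^2}\|w\overleftarrow\Delta_h^k(f,\cdot)\|_{L_q[1-2k^2\delta^2,1]}$. $\mathbb M^k$: functions on $(-1,1)$ with all $k$th divided differences at distinct points nonnegative; $\mathbb M_+^k=\{f\in\mathbb M^k:f=0\text{ on }(-1,0]\}$. *)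

theory Defs
  imports "HOL-Analysis.Analysis"
begin

definition jacobi_w :: "real \<Rightarrow> real \<Rightarrow> real \<Rightarrow> real" where
  "jacobi_w \<alpha> \<beta> x = (1 + x) powr \<alpha> * (1 - x) powr \<beta>"

text \<open>L_q quasi-norm of g over S (as an extended nonnegative real; infinite if the
  integral diverges). Functions live on [-1,1], so S is intersected with [-1,1].\<close>
definition Lq_norm :: "real set \<Rightarrow> real \<Rightarrow> (real \<Rightarrow> real) \<Rightarrow> ennreal" where
  "Lq_norm S q g =
     (let I = (\<integral>\<^sup>+ x. indicator (S \<inter> {-1..1}) x * ennreal (\<bar>g x\<bar> powr q) \<partial>lborel)
      in if I = \<infinity> then \<infinity> else ennreal ((enn2real I) powr (1 / q)))"

definition W_space :: "real \<Rightarrow> real \<Rightarrow> real \<Rightarrow> (real \<Rightarrow> real) set" where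
  "W_space q \<alpha> \<beta> = {f. Lq_norm {-1..1} q (\<lambda>x. jacobi_w \<alpha> \<beta> x * f x) < \<infinity>}"

text \<open>Symmetric k-th difference with the convention that it vanishes unless x \<plusminus> kh/2 \<in> [-1,1].\<close>
definition sym_diff :: "nat \<Rightarrow> real \<Rightarrow> (real \<Rightarrow> real) \<Rightarrow> real \<Rightarrow> real" where
  "sym_diff k h f x =
     (if -1 \<le> x - real k * h / 2 \<and> x + real k * h / 2 \<le> 1
      then (\<Sum>i=0..k. real (k choose i) * (-1) ^ (k - i) * f (x - real k * h / 2 + real i * h))
      else 0)"

definition back_diff :: "nat \<Rightarrow> real \<Rightarrow> (real \<Rightarrow> real) \<Rightarrow> real \<Rightarrow> real" where
  "back_diff k h f x = sym_diff k h f (x - real k * h / 2)"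

definition back_Omega ::
  "nat \<Rightarrow> (real \<Rightarrow> real) \<Rightarrow> real \<Rightarrow> (real \<Rightarrow> real) \<Rightarrow> real \<Rightarrow> ennreal" where
  "back_Omega k f \<delta> w q =
     (SUP h\<in>{0<..2 * (real k)\<^sup>2 * \<delta>\<^sup>2}.
        Lq_norm {1 - 2 * (real k)\<^sup>2 * \<delta>\<^sup>2..1} q (\<lambda>x. w x * back_diff k h f x))"

definition divided_diff :: "nat \<Rightarrow> (nat \<Rightarrow> real) \<Rightarrow> (real \<Rightarrow> real) \<Rightarrow> real" where
  "divided_diff k x f = (\<Sum>i=0..k. f (x i) / (\<Prod>j\<in>{0..k} - {i}. (x i - x j)))"

definition k_monotone :: "nat \<Rightarrow> (real \<Rightarrow> real) set" where
  "k_monotone k = {f. \<forall>x. inj_on x {0..k} \<longrightarrow> (\<forall>i\<in>{0..k}. x i \<in> {-1<..<1})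
                         \<longrightarrow> divided_diff k x f \<ge> 0}"

definition k_monotone_plus :: "nat \<Rightarrow> (real \<Rightarrow> real) set" where
  "k_monotone_plus k = {f \<in> k_monotone k. \<forall>x\<in>{-1<..0}. f x = 0}"

end

theory Submission
  imports Defs
begin

(*
  For k \<ge> 1 every f in M_+^k is nonnegative and nondecreasing on (-1,1). Indeed, placing all
  but one (resp. two) nodes of a k-th divided difference in (-1,0), where f vanishes, leaves a
  nonnegative divided difference with a single term f y / P (resp. two terms, which give
  f a / P_a \<le> f b / P_b with 0 < P_a \<le> P_b). Consequently each value f(x - kh + ih) entering
  the backward difference lies in [0, f x], so |\<Delta>_h^k(f,x)| \<le> 2^k f(x) pointwise and the
  estimate holds with c = 2^k.
*)

lemma exists_inj_seq_in_neg_interval: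
  "\<exists>z::nat \<Rightarrow> real. inj z \<and> (\<forall>j. -1 < z j \<and> z j < 0)"
proof (intro exI conjI allI)
  show "inj (\<lambda>j. -1 / (real j + 2))"
    by (rule injI) (simp add: divide_simps)
  show "-1 < -1 / (real j + 2)" and "-1 / (real j + 2) < 0" for j
    by (simp_all add: field_simps)
qed

lemma divided_diff_eq_sum_from:
  assumes "m \<le> k" and "\<And>i. i < m \<Longrightarrow> f (x i) = 0"
  shows "divided_diff k x f = (\<Sum>i=m..k. f (x i) / (\<Prod>j\<in>{0..k} - {i}. x i - x j))"
  unfolding divided_diff_def using assms
  by (intro sum.mono_neutral_right) auto

lemma prod_atLeast0AtMost_remove_split:
  fixes i m k :: nat
  assumes "i \<in> {m..k}"
  shows "(\<Prod>j\<in>{0..k} - {i}. g j) = (\<Prod>j<m. g j) * (\<Prod>j\<in>{m..k} - {i}. g j)"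
proof -
  have "{0..k} - {i} = {..<m} \<union> ({m..k} - {i})" using assms by auto
  also have "prod g \<dots> = prod g {..<m} * prod g ({m..k} - {i})"
    by (rule prod.union_disjoint) auto
  finally show ?thesis .
qed

lemma k_monotone_plus_nonneg:
  assumes f: "f \<in> k_monotone_plus k" and y: "-1 < y" "y < 1"
  shows "0 \<le> f y"
proof (cases "y \<le> 0")
  case True
  then show ?thesis using f y unfolding k_monotone_plus_def by auto
next
  case False
  obtain z :: "nat \<Rightarrow> real" where "inj z" and z: "\<And>j. -1 < z j \<and> z j < 0"
    using exists_inj_seq_in_neg_interval by blast
  have zy: "z j < y" for j using z[of j] False by linarith
  define x where "x j = (if j < k then z j else y)" for j
  have "inj_on x {0..k}"
  proof (rule inj_onI)
    fix i j assume "i \<in> {0..k}" "j \<in> {0..k}" "x i = x j"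
    then show "i = j"
      using \<open>inj z\<close> z[of i] z[of j] False by (auto simp: x_def inj_eq split: if_splits)
  qed
  moreover have "\<forall>i\<in>{0..k}. x i \<in> {-1<..<1}"
    using z y by (simp add: x_def) (meson less_trans zero_less_one)
  ultimately have "0 \<le> divided_diff k x f"
    using f unfolding k_monotone_plus_def k_monotone_def by blast
  also have "divided_diff k x f = f y / (\<Prod>j\<in>{0..k} - {k}. y - x j)"
  proof -
    have "f (x i) = 0" if "i < k" for i
      using f z[of i] that by (auto simp: x_def k_monotone_plus_def)
    then show ?thesis by (simp add: divided_diff_eq_sum_from[of k k] x_def)
  qed
  also have "(\<Prod>j\<in>{0..k} - {k}. y - x j) = (\<Prod>j<k. y - z j)"
    by (simp add: prod_atLeast0AtMost_remove_split[of k k] x_def)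
  finally have "0 \<le> f y / (\<Prod>j<k. y - z j)" .
  moreover have "0 < (\<Prod>j<k. y - z j)" using zy by (intro prod_pos) simp
  ultimately show ?thesis by (simp add: zero_le_divide_iff)
qed

lemma k_monotone_plus_mono:
  assumes f: "f \<in> k_monotone_plus k" and "k \<ge> 1" and ab: "-1 < a" "a < b" "b < 1"
  shows "f a \<le> f b"
proof (cases "a \<le> 0")
  case True
  then show ?thesis
    using f ab k_monotone_plus_nonneg[OF f, of b] unfolding k_monotone_plus_def by auto
next
  case False
  obtain m where k: "k = Suc m" using \<open>k \<ge> 1\<close> by (cases k) auto
  obtain z :: "nat \<Rightarrow> real" where "inj z" and z: "\<And>j. -1 < z j \<and> z j < 0"
    using exists_inj_seq_in_neg_interval by blast
  define x where "x j = (if j < m then z j else if j = m then a else b)" for j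
  have xz: "x j = z j" if "j < m" for j using that by (simp add: x_def)
  define Pa where "Pa = (\<Prod>j<m. a - z j)"
  define Pb where "Pb = (\<Prod>j<m. b - z j)"
  have za: "z j < a" for j using z[of j] False by linarith
  have "0 < Pa" unfolding Pa_def using za by (intro prod_pos) simp
  have "Pa \<le> Pb" unfolding Pa_def Pb_def using za ab by (intro prod_mono) (simp add: less_imp_le)
  have "inj_on x {0..k}"
  proof (rule inj_onI)
    fix i j assume "i \<in> {0..k}" "j \<in> {0..k}" "x i = x j"
    then show "i = j"
      using \<open>inj z\<close> z[of i] z[of j] False ab k by (auto simp: x_def inj_eq split: if_splits)
  qed
  moreover have "\<forall>i\<in>{0..k}. x i \<in> {-1<..<1}"
    using z ab by (simp add: x_def) (meson less_trans zero_less_one)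
  ultimately have "0 \<le> divided_diff k x f"
    using f unfolding k_monotone_plus_def k_monotone_def by blast
  also have "divided_diff k x f = f a / (Pa * (a - b)) + f b / (Pb * (b - a))"
  proof -
    have "f (x i) = 0" if "i < m" for i
      using f z[of i] that by (auto simp: xz k_monotone_plus_def)
    then have "divided_diff k x f = (\<Sum>i=m..Suc m. f (x i) / (\<Prod>j\<in>{0..k} - {i}. x i - x j))"
      unfolding k by (intro divided_diff_eq_sum_from) simp_all
    also have "\<dots> = f a / (\<Prod>j\<in>{0..k} - {m}. a - x j) + f b / (\<Prod>j\<in>{0..k} - {Suc m}. b - x j)"
      by (simp add: sum.cl_ivl_Suc x_def[of m] x_def[of "Suc m"])
    also have "(\<Prod>j\<in>{0..k} - {m}. a - x j) = Pa * (a - b)"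
    proof -
      have "{m..k} - {m} = {Suc m}" using k by auto
      then show ?thesis
        using prod_atLeast0AtMost_remove_split[of m m k "\<lambda>j. a - x j"] k
        by (simp add: Pa_def x_def[of "Suc m"] xz)
    qed
    also have "(\<Prod>j\<in>{0..k} - {Suc m}. b - x j) = Pb * (b - a)"
    proof -
      have "{m..k} - {Suc m} = {m}" using k by auto
      then show ?thesis
        using prod_atLeast0AtMost_remove_split[of "Suc m" m k "\<lambda>j. b - x j"] k
        by (simp add: Pb_def x_def[of m] xz)
    qed
    finally show ?thesis .
  qed
  also have "\<dots> = (f b / Pb - f a / Pa) / (b - a)"
  proof -
    have "a - b = - (b - a)" by simp
    then show ?thesis
      by (simp only: diff_divide_distrib divide_divide_eq_left mult_minus_right divide_minus_right)
  qed
  finally have "f a / Pa \<le> f b / Pb"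
    using ab by (simp add: zero_le_divide_iff)
  moreover have "f a / Pb \<le> f a / Pa"
    using k_monotone_plus_nonneg[OF f] ab \<open>0 < Pa\<close> \<open>Pa \<le> Pb\<close> by (intro divide_left_mono) auto
  ultimately have "f a / Pb \<le> f b / Pb" by linarith
  then show ?thesis
    using \<open>0 < Pa\<close> \<open>Pa \<le> Pb\<close> by (simp add: divide_le_cancel)
qed

lemma back_diff_eq_sum:
  assumes "-1 \<le> x - real k * h" and "x \<le> 1"
  shows "back_diff k h f x
           = (\<Sum>i=0..k. real (k choose i) * (-1) ^ (k - i) * f (x - real k * h + real i * h))"
proof -
  have l: "x - real k * h / 2 - real k * h / 2 = x - real k * h"
    and r: "x - real k * h / 2 + real k * h / 2 = x" by simp_all
  show ?thesis using assms unfolding back_diff_def sym_diff_def l r by simp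
qed

lemma back_diff_eq_0:
  assumes "x - real k * h < -1"
  shows "back_diff k h f x = 0"
proof -
  have l: "x - real k * h / 2 - real k * h / 2 = x - real k * h"
    and r: "x - real k * h / 2 + real k * h / 2 = x" by simp_all
  show ?thesis using assms unfolding back_diff_def sym_diff_def l r by simp
qed

lemma k_monotone_plus_abs_back_diff_le:
  assumes f: "f \<in> k_monotone_plus k" and "k \<ge> 1" and "h > 0"
    and x: "-1 < x - real k * h" "x < 1"
  shows "\<bar>back_diff k h f x\<bar> \<le> 2 ^ k * f x"
proof -
  have node: "-1 < x - real k * h + real i * h \<and> x - real k * h + real i * h \<le> x" if "i \<le> k" for i
  proof -
    have "0 \<le> real i * h" and "real i * h \<le> real k * h"
      using \<open>h > 0\<close> that by (simp_all add: mult_right_mono)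
    then show ?thesis using x by linarith
  qed
  have "\<bar>back_diff k h f x\<bar>
      \<le> (\<Sum>i=0..k. \<bar>real (k choose i) * (-1) ^ (k - i) * f (x - real k * h + real i * h)\<bar>)"
    unfolding back_diff_eq_sum[OF less_imp_le less_imp_le, OF x] by (rule sum_abs)
  also have "\<dots> \<le> (\<Sum>i=0..k. real (k choose i) * f x)"
  proof (rule sum_mono)
    fix i assume "i \<in> {0..k}"
    define p where "p = x - real k * h + real i * h"
    have p: "-1 < p" "p \<le> x" using node \<open>i \<in> {0..k}\<close> unfolding p_def by auto
    have "0 \<le> f p" using k_monotone_plus_nonneg[OF f] p x by simp
    moreover have "f p \<le> f x"
      using k_monotone_plus_mono[OF f \<open>k \<ge> 1\<close>] p x by (cases "p = x") auto
    ultimately show "\<bar>real (k choose i) * (-1) ^ (k - i) * f p\<bar> \<le> real (k choose i) * f x"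
      by (simp add: abs_mult power_abs mult_left_mono)
  qed
  also have "\<dots> = 2 ^ k * f x"
    using choose_row_sum[of k] by (simp add: atLeast0AtMost flip: sum_distrib_right of_nat_sum)
  finally show ?thesis .
qed

lemma k_monotone_plus_abs_back_diff_le_abs:
  assumes f: "f \<in> k_monotone_plus k" and "k \<ge> 1" and "h > 0"
    and "x < 1" and "x - real k * h \<noteq> -1"
  shows "\<bar>back_diff k h f x\<bar> \<le> 2 ^ k * \<bar>f x\<bar>"
proof (cases "-1 < x - real k * h")
  case True
  moreover have "-1 < x" using True mult_nonneg_nonneg[of "real k" h] \<open>h > 0\<close> by linarith
  ultimately show ?thesis
    using k_monotone_plus_abs_back_diff_le[OF assms(1-3)] k_monotone_plus_nonneg[OF f] \<open>x < 1\<close>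
    by simp
next
  case False
  then show ?thesis using assms(5) by (simp add: back_diff_eq_0)
qed

(* Unlike nn_integral_cmult this needs no measurability, which Lq_norm does not provide. *)
lemma nn_integral_cmult_le:
  assumes c: "c > 0"
  shows "(\<integral>\<^sup>+ x. ennreal c * f x \<partial>M) \<le> ennreal c * (\<integral>\<^sup>+ x. f x \<partial>M)"
  unfolding nn_integral_def
proof (rule SUP_least)
  fix g assume g: "g \<in> {g. simple_function M g \<and> g \<le> (\<lambda>x. ennreal c * f x)}"
  define g' where "g' x = ennreal (1/c) * g x" for x
  have inv: "ennreal c * ennreal (1/c) = 1" "ennreal (1/c) * ennreal c = 1"
    using c by (simp_all add: ennreal_mult[symmetric])
  have sg': "simple_function M g'" using g unfolding g'_def by auto
  have "g' \<le> f"
  proof (rule le_funI)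
    fix x
    have "g x \<le> ennreal c * f x" using g by (auto simp: le_fun_def)
    then have "g' x \<le> ennreal (1/c) * (ennreal c * f x)" unfolding g'_def by (rule mult_left_mono) simp
    also have "\<dots> = f x" by (simp add: mult.assoc[symmetric] inv)
    finally show "g' x \<le> f x" .
  qed
  have "g = (\<lambda>x. ennreal c * g' x)" unfolding g'_def by (simp add: mult.assoc[symmetric] inv)
  then have "integral\<^sup>S M g = ennreal c * integral\<^sup>S M g'"
    using sg' by simp
  also have "\<dots> \<le> ennreal c * (SUP g\<in>{g. simple_function M g \<and> g \<le> f}. integral\<^sup>S M g)"
    using sg' \<open>g' \<le> f\<close> by (intro mult_left_mono SUP_upper) auto
  finally show "integral\<^sup>S M g \<le> ennreal c * (SUP g\<in>{g. simple_function M g \<and> g \<le> f}. integral\<^sup>S M g)" .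
qed

lemma Lq_norm_le_cmult:
  assumes "c > 0" and "q > 0"
    and le: "AE x in lborel. x \<in> S \<inter> {-1..1} \<longrightarrow> \<bar>g x\<bar> \<le> c * \<bar>g' x\<bar>"
  shows "Lq_norm S q g \<le> ennreal c * Lq_norm S q g'"
proof -
  define I where "I = (\<integral>\<^sup>+ x. indicator (S \<inter> {-1..1}) x * ennreal (\<bar>g x\<bar> powr q) \<partial>lborel)"
  define I' where "I' = (\<integral>\<^sup>+ x. indicator (S \<inter> {-1..1}) x * ennreal (\<bar>g' x\<bar> powr q) \<partial>lborel)"
  have "I \<le> (\<integral>\<^sup>+ x. ennreal (c powr q) * (indicator (S \<inter> {-1..1}) x * ennreal (\<bar>g' x\<bar> powr q)) \<partial>lborel)"
    unfolding I_def using le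
  proof (intro nn_integral_mono_AE, eventually_elim)
    case (elim x)
    show ?case
    proof (cases "x \<in> S \<inter> {-1..1}")
      case True
      then have "\<bar>g x\<bar> powr q \<le> (c * \<bar>g' x\<bar>) powr q"
        using elim \<open>q > 0\<close> by (intro powr_mono2) auto
      also have "\<dots> = c powr q * \<bar>g' x\<bar> powr q" using \<open>c > 0\<close> by (simp add: powr_mult)
      finally show ?thesis using True \<open>c > 0\<close> by (simp add: ennreal_mult[symmetric])
    qed simp
  qed
  also have "\<dots> \<le> ennreal (c powr q) * I'"
    unfolding I'_def using \<open>c > 0\<close> by (intro nn_integral_cmult_le) simp
  finally have I_le: "I \<le> ennreal (c powr q) * I'" .
  show ?thesis
  proof (cases "I' = \<infinity>")
    case True
    then show ?thesis using \<open>c > 0\<close> by (simp add: Lq_norm_def I'_def[symmetric] ennreal_mult_top)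
  next
    case False
    then have fin: "ennreal (c powr q) * I' < \<infinity>"
      by (simp add: ennreal_mult_less_top less_top)
    with I_le have "I \<noteq> \<infinity>" by auto
    have "enn2real I \<le> c powr q * enn2real I'"
      using enn2real_mono[OF I_le] fin by (simp add: enn2real_mult)
    then have "enn2real I powr (1/q) \<le> (c powr q * enn2real I') powr (1/q)"
      using \<open>q > 0\<close> by (intro powr_mono2) auto
    also have "\<dots> = c * enn2real I' powr (1/q)"
      using \<open>c > 0\<close> \<open>q > 0\<close> by (simp add: powr_mult powr_powr)
    finally show ?thesis
      using \<open>I \<noteq> \<infinity>\<close> False \<open>c > 0\<close>
      by (simp add: Lq_norm_def I_def[symmetric] I'_def[symmetric] ennreal_mult[symmetric] ennreal_leI)
  qed
qed

theorem lemma4p1: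
  fixes k :: nat and q \<alpha> \<beta> :: real
  assumes "k \<ge> 1" and "1 \<le> q"
  shows "\<exists>c::real. c > 0 \<and>
           (\<forall>f \<delta>. f \<in> k_monotone_plus k \<inter> W_space q \<alpha> \<beta> \<longrightarrow> \<delta> > 0 \<longrightarrow>
              back_Omega k f \<delta> (jacobi_w \<alpha> \<beta>) q
                \<le> ennreal c * Lq_norm {1 - 2 * (real k)\<^sup>2 * \<delta>\<^sup>2..1} q
                                     (\<lambda>x. jacobi_w \<alpha> \<beta> x * f x))"
proof (intro exI[of _ "2 ^ k"] conjI allI impI)
  fix f and \<delta> :: real
  assume "f \<in> k_monotone_plus k \<inter> W_space q \<alpha> \<beta>"
  then have f: "f \<in> k_monotone_plus k" by simp
  show "back_Omega k f \<delta> (jacobi_w \<alpha> \<beta>) q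
        \<le> ennreal (2 ^ k) * Lq_norm {1 - 2 * (real k)\<^sup>2 * \<delta>\<^sup>2..1} q (\<lambda>x. jacobi_w \<alpha> \<beta> x * f x)"
    unfolding back_Omega_def
  proof (rule SUP_least)
    fix h :: real assume "h \<in> {0<..2 * (real k)\<^sup>2 * \<delta>\<^sup>2}"
    then have "h > 0" by simp
    let ?S = "{1 - 2 * (real k)\<^sup>2 * \<delta>\<^sup>2..1}"
    have bound: "\<bar>jacobi_w \<alpha> \<beta> x * back_diff k h f x\<bar> \<le> 2 ^ k * \<bar>jacobi_w \<alpha> \<beta> x * f x\<bar>"
      if "x < 1" and "x - real k * h \<noteq> -1" for x
      using mult_left_mono[OF k_monotone_plus_abs_back_diff_le_abs[OF f \<open>k \<ge> 1\<close> \<open>h > 0\<close> that],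
          of "\<bar>jacobi_w \<alpha> \<beta> x\<bar>"]
      by (simp add: abs_mult mult.left_commute)
    (* f is unconstrained at \<plusminus>1; the difference only reaches these values on a null set. *)
    have "AE x in lborel. x \<in> ?S \<inter> {-1..1} \<longrightarrow>
        \<bar>jacobi_w \<alpha> \<beta> x * back_diff k h f x\<bar> \<le> 2 ^ k * \<bar>jacobi_w \<alpha> \<beta> x * f x\<bar>"
      using AE_lborel_singleton[of 1] AE_lborel_singleton[of "real k * h - 1"]
      by eventually_elim (auto intro!: bound)
    then show "Lq_norm ?S q (\<lambda>x. jacobi_w \<alpha> \<beta> x * back_diff k h f x)
        \<le> ennreal (2 ^ k) * Lq_norm ?S q (\<lambda>x. jacobi_w \<alpha> \<beta> x * f x)"
      using \<open>1 \<le> q\<close> by (intro Lq_norm_le_cmult) simp_all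
  qed
qed simp

end
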